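(* For all complex $q$ with $|q|<1$, $$\psi(q^3)\psi(q^5)=\varphi(q^{60})\psi(q^8)+q^{14}\varphi(q^4)\psi(q^{120})+q^3\psi(q^{12})\psi(q^{20})+q^5\varphi(q^{40})\psi(q^{48})+q^9\varphi(q^{24})\psi(q^{80}),$$ $$\psi(q)\psi(q^{15})=\varphi(q^{120})\psi(q^{16})+q^{28}\varphi(q^8)\psi(q^{240})+q^6\psi(q^4)\psi(q^{60})+q\varphi(q^{20})\psi(q^{24})+q^3\varphi(q^{12})\psi(q^{40}).$$
   Context: Ramanujan's theta functions are $\varphi(q)=\sum_{n=-\infty}^{\infty}q^{n^2}$ and $\psi(q)=\sum_{n=0}^{\infty}q^{n(n+1)/2}$ for $|q|<1$. *)

theory Defs
  imports "HOL-Analysis.Analysis"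
begin

definition ram_phi :: "complex \<Rightarrow> complex" where
  "ram_phi q = (\<Sum>\<^sub>\<infinity>n::int. q ^ (nat (n^2)))"

definition ram_psi :: "complex \<Rightarrow> complex" where
  "ram_psi q = (\<Sum>n::nat. q ^ (n * (n + 1) div 2))"

end

theory Submission
  imports Defs
begin

(* With x = 2a+1, y = 2b+1 and T(a) = a(a+1)/2 we have alpha x^2 + beta y^2
   = 8 (alpha T(a) + beta T(b)) + alpha + beta, so 4 psi(q^alpha) psi(q^beta) is the sum of
   q^((alpha x^2 + beta y^2 - alpha - beta)/8) over all pairs of odd integers.  The reflection
   x -> -x (that is, a -> -a-1) swaps a class of odd pairs with its complement -- x == y (mod 4)
   for 3x^2 + 5y^2, and x == y or x == 3y (mod 8) for x^2 + 15y^2 -- so the sum over the class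
   is 2 psi(q^alpha) psi(q^beta).  Each class is the disjoint union of five images of injective
   affine maps of Z^2 (or of a half-lattice a + b even/odd) under which the form becomes
   8 (k + m a^2 + n T(b)) or 8 (k + m T(a) + n T(b)), so that each image contributes one term
   q^k phi(q^m) psi(q^n) or q^k psi(q^m) psi(q^n).  Three of the five maps come from the
   rational automorphs (x, y) -> ((5y - x)/4, (3x + y)/4) of 3x^2 + 5y^2 and
   (x, y) -> ((x - 15y)/4, (x + y)/4) of x^2 + 15y^2. *)

lemma summable_norm_power_superlinear:
  fixes q :: "'a::real_normed_div_algebra"
  assumes "norm q < 1" "\<And>n. n \<le> e n"
  shows "summable (\<lambda>n. norm (q ^ e n))"
proof (rule summable_comparison_test)
  show "\<exists>N. \<forall>n\<ge>N. norm (norm (q ^ e n)) \<le> norm q ^ n"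
    using assms by (auto simp: norm_power intro!: power_decreasing)
  show "summable (\<lambda>n. norm q ^ n)"
    using assms by (simp add: summable_geometric)
qed

lemma has_sum_int_split:
  fixes f :: "int \<Rightarrow> 'a::{topological_comm_monoid_add, t2_space}"
  assumes "((\<lambda>n. f (int n)) has_sum A) UNIV" "((\<lambda>n. f (- int n - 1)) has_sum B) UNIV"
  shows "(f has_sum A + B) UNIV"
proof -
  have "(f has_sum A) (range int)" "(f has_sum B) (range (\<lambda>n. - int n - 1))"
    using assms by (simp_all add: has_sum_reindex inj_on_def o_def)
  then have "(f has_sum A + B) (range int \<union> range (\<lambda>n. - int n - 1))"
    by (rule has_sum_Un_disjoint) auto
  moreover have "range int \<union> range (\<lambda>n. - int n - 1) = UNIV"
  proof -
    have "k \<in> range int \<or> k \<in> range (\<lambda>n. - int n - 1)" for k :: int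
      by (cases "k \<ge> 0") (auto intro: image_eqI[of _ _ "nat k"] image_eqI[of _ _ "nat (- k - 1)"])
    then show ?thesis by blast
  qed
  ultimately show ?thesis by simp
qed

lemma has_sum_int_power:
  fixes q :: "'a::{real_normed_div_algebra, banach}" and e :: "int \<Rightarrow> nat"
  assumes q: "norm q < 1" and e: "\<And>n. n \<le> e (int n)" "\<And>n. n \<le> e (- int n - 1)"
  shows "((\<lambda>k. q ^ e k) has_sum (\<Sum>n. q ^ e (int n)) + (\<Sum>n. q ^ e (- int n - 1))) UNIV"
    and "(\<lambda>k. norm (q ^ e k)) summable_on UNIV"
proof -
  have "((\<lambda>n. q ^ e (h n)) has_sum (\<Sum>n. q ^ e (h n))) UNIV"
     and "((\<lambda>n. norm (q ^ e (h n))) has_sum (\<Sum>n. norm (q ^ e (h n)))) UNIV"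
    if "\<And>n. n \<le> e (h n)" for h :: "nat \<Rightarrow> int"
  proof -
    have s: "summable (\<lambda>n. norm (q ^ e (h n)))"
      using summable_norm_power_superlinear[OF q that] .
    show "((\<lambda>n. q ^ e (h n)) has_sum (\<Sum>n. q ^ e (h n))) UNIV"
      by (rule norm_summable_imp_has_sum[OF s summable_sums[OF summable_norm_cancel[OF s]]])
    show "((\<lambda>n. norm (q ^ e (h n))) has_sum (\<Sum>n. norm (q ^ e (h n)))) UNIV"
      using s by (intro norm_summable_imp_has_sum) (simp_all add: summable_sums)
  qed
  note halves = this[of int, OF e(1)] this[of "\<lambda>n. - int n - 1", OF e(2)]
  show "((\<lambda>k. q ^ e k) has_sum (\<Sum>n. q ^ e (int n)) + (\<Sum>n. q ^ e (- int n - 1))) UNIV"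
    using halves by (intro has_sum_int_split)
  show "(\<lambda>k. norm (q ^ e k)) summable_on UNIV"
    using has_sum_int_split[OF halves(2,4)] by (rule has_sum_imp_summable)
qed

definition tri :: "int \<Rightarrow> int" where
  "tri b = b * (b + 1) div 2"

lemma eight_tri: "8 * tri b = (2 * b + 1)^2 - 1"
proof -
  have "2 * tri b = b * (b + 1)"
    unfolding tri_def by simp
  then show ?thesis
    by (simp add: power2_eq_square algebra_simps)
qed

lemma tri_nonneg: "0 \<le> tri b"
proof -
  have "0 \<le> b * (b + 1)"
    by (cases "b \<ge> 0") (auto intro: mult_nonneg_nonneg mult_nonpos_nonpos)
  then show ?thesis
    unfolding tri_def by simp
qed

lemma tri_reflect: "tri (- b - 1) = tri b"
  unfolding tri_def by (simp add: algebra_simps)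

lemma tri_of_nat: "tri (int n) = int (n * (n + 1) div 2)"
  unfolding tri_def by (simp add: zdiv_int algebra_simps)

lemma has_sum_ram_psi_int:
  fixes q :: complex
  assumes "norm q < 1"
  shows "((\<lambda>b. q ^ nat (tri b)) has_sum 2 * ram_psi q) UNIV"
    and "(\<lambda>b. norm (q ^ nat (tri b))) summable_on UNIV"
proof -
  have "n \<le> n * (n + 1) div 2" for n :: nat
    by (induction n) auto
  then have e: "n \<le> nat (tri (int n))" "n \<le> nat (tri (- int n - 1))" for n
    by (simp_all add: tri_reflect tri_of_nat)
  show "((\<lambda>b. q ^ nat (tri b)) has_sum 2 * ram_psi q) UNIV"
    using has_sum_int_power(1)[OF assms e] by (simp add: tri_reflect tri_of_nat ram_psi_def)
  show "(\<lambda>b. norm (q ^ nat (tri b))) summable_on UNIV"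
    using has_sum_int_power(2)[OF assms e] .
qed

lemma has_sum_ram_phi_int:
  fixes q :: complex
  assumes "norm q < 1"
  shows "((\<lambda>a. q ^ nat (a^2)) has_sum ram_phi q) UNIV"
    and "(\<lambda>a. norm (q ^ nat (a^2))) summable_on UNIV"
proof -
  have e1: "n \<le> nat ((int n)^2)" for n
    by (simp add: power2_eq_square nat_mult_distrib)
  have e2: "n \<le> nat ((- int n - 1)^2)" for n
  proof -
    have "(- int n - 1)^2 = int ((n + 1)^2)"
      by (simp add: power2_eq_square algebra_simps)
    then show ?thesis
      by (metis le_add1 nat_int power2_nat_le_imp_le power2_nat_le_eq_le)
  qed
  show abs: "(\<lambda>a. norm (q ^ nat (a^2))) summable_on UNIV"
    using has_sum_int_power(2)[OF assms e1 e2] .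
  show "((\<lambda>a. q ^ nat (a^2)) has_sum ram_phi q) UNIV"
    unfolding ram_phi_def using abs_summable_summable[OF abs] by (rule has_sum_infsum)
qed

lemma has_sum_mult_product:
  fixes f :: "'a \<Rightarrow> 'c::{real_normed_div_algebra, banach}" and g :: "'b \<Rightarrow> 'c"
  assumes "(f has_sum F) UNIV" "(g has_sum G) UNIV"
    and "(\<lambda>a. norm (f a)) summable_on UNIV" "(\<lambda>b. norm (g b)) summable_on UNIV"
  shows "((\<lambda>(a, b). f a * g b) has_sum F * G) UNIV"
proof -
  have "(\<lambda>(a, b). norm (f a * g b)) summable_on UNIV \<times> UNIV"
  proof (rule summable_on_SigmaI[where g = "\<lambda>a. norm (f a) * infsum (\<lambda>b. norm (g b)) UNIV"])
    show "((\<lambda>b. case (a, b) of (a, b) \<Rightarrow> norm (f a * g b))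
            has_sum norm (f a) * infsum (\<lambda>b. norm (g b)) UNIV) UNIV" for a
      using has_sum_cmult_right[OF has_sum_infsum[OF assms(4)], of "norm (f a)"] by (simp add: norm_mult)
    show "(\<lambda>a. norm (f a) * infsum (\<lambda>b. norm (g b)) UNIV) summable_on UNIV"
      using assms(3) by (rule summable_on_cmult_left)
  qed (simp_all add: case_prod_unfold)
  then have "(\<lambda>p. norm (case p of (a, b) \<Rightarrow> f a * g b)) summable_on UNIV \<times> UNIV"
    by (simp add: case_prod_unfold)
  then have "(\<lambda>(a, b). f a * g b) summable_on UNIV \<times> UNIV"
    by (rule abs_summable_summable)
  then have "((\<lambda>(a, b). f a * g b) has_sum F * G) (UNIV \<times> UNIV)"
  proof (rule has_sum_SigmaI[rotated 2])
    show "((\<lambda>b. case (a, b) of (a, b) \<Rightarrow> f a * g b) has_sum f a * G) UNIV" for a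
      using has_sum_cmult_right[OF assms(2)] by simp
    show "((\<lambda>a. f a * G) has_sum F * G) UNIV"
      using has_sum_cmult_left[OF assms(1)] by simp
  qed
  then show ?thesis by simp
qed

lemma has_sum_mult_half:
  fixes f g :: "int \<Rightarrow> 'c::{real_normed_field, banach}"
  assumes "(f has_sum F) UNIV" "(g has_sum G) UNIV"
    and "(\<lambda>a. norm (f a)) summable_on UNIV" "(\<lambda>b. norm (g b)) summable_on UNIV"
    and f_reflect: "\<And>a. f (- a - 1) = f a"
    and T_split: "\<And>a b. (a, b) \<in> T \<longleftrightarrow> (- a - 1, b) \<notin> T"
  shows "((\<lambda>(a, b). f a * g b) has_sum F * G / 2) T"
proof -
  let ?h = "\<lambda>(a, b). f a * g b" and ?\<sigma> = "\<lambda>(a, b). (- a - 1, b :: int)"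
  have full: "(?h has_sum F * G) UNIV"
    using has_sum_mult_product[OF assms(1-4)] .
  then obtain s where s: "(?h has_sum s) T"
    using summable_on_subset_banach[OF has_sum_imp_summable] by (metis subset_UNIV has_sum_infsum)
  have "(?h has_sum s) (?\<sigma> ` T)"
    by (subst has_sum_reindex) (use s f_reflect in \<open>auto simp: inj_on_def o_def case_prod_unfold\<close>)
  moreover have "?\<sigma> ` T = - T"
  proof -
    have "(a, b) \<in> ?\<sigma> ` T \<longleftrightarrow> (- a - 1, b) \<in> T" for a b
      by (auto intro: image_eqI[of _ _ "(- a - 1, b)"])
    also have "\<dots> a b \<longleftrightarrow> (a, b) \<in> - T" for a b
      using T_split[of "- a - 1" b] by simp
    finally show ?thesis
      by (simp add: set_eq_iff split_paired_All)
  qed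
  ultimately have "(?h has_sum s + s) (T \<union> - T)"
    using s by (intro has_sum_Un_disjoint) auto
  then have "F * G = s + s"
    using has_sum_unique[OF full] by simp
  then have "F * G / 2 = s"
    by simp
  with s show ?thesis by (simp only:)
qed

lemma has_sum_image_scaled:
  fixes h :: "'b \<Rightarrow> 'c::{topological_semigroup_mult, semiring_0, t2_space}"
  assumes "(g has_sum s) T" "inj_on j T" "\<And>p. p \<in> T \<Longrightarrow> h (j p) = c * g p"
  shows "(h has_sum c * s) (j ` T)"
proof -
  have "((\<lambda>p. c * g p) has_sum c * s) T"
    using assms(1) by (rule has_sum_cmult_right)
  then have "(h \<circ> j has_sum c * s) T"
    by (rule has_sum_cong[THEN iffD1, rotated]) (simp add: assms(3))
  then show ?thesis
    using has_sum_reindex[OF assms(2)] by blast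
qed

(* At x = 2a+1, y = 2b+1 the exponent is alpha T(a) + beta T(b); the div and nat are exact
   only for such arguments, which are the only ones used. *)
definition theta_term :: "int \<Rightarrow> int \<Rightarrow> complex \<Rightarrow> int \<times> int \<Rightarrow> complex" where
  "theta_term \<alpha> \<beta> q = (\<lambda>(x, y). q ^ nat ((\<alpha> * x^2 + \<beta> * y^2 - \<alpha> - \<beta>) div 8))"

lemma theta_term_eq:
  assumes "\<alpha> * x^2 + \<beta> * y^2 - \<alpha> - \<beta> = 8 * (int k + int m * u + int n * v)" "0 \<le> u" "0 \<le> v"
  shows "theta_term \<alpha> \<beta> q (x, y) = q ^ k * ((q ^ m) ^ nat u * (q ^ n) ^ nat v)"
proof -
  have "nat ((\<alpha> * x^2 + \<beta> * y^2 - \<alpha> - \<beta>) div 8) = k + m * nat u + n * nat v"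
    using assms by (simp add: nat_add_distrib nat_mult_distrib)
  then show ?thesis
    by (simp add: theta_term_def power_add power_mult)
qed

lemma has_sum_theta_term_phi_psi:
  fixes X Y :: "int \<Rightarrow> int \<Rightarrow> int" and q :: complex
  assumes q: "norm q < 1" and mn: "0 < m" "0 < n"
    and inj: "\<And>a b a' b'. X a b = X a' b' \<Longrightarrow> Y a b = Y a' b' \<Longrightarrow> a = a' \<and> b = b'"
    and form: "\<And>a b. \<alpha> * (X a b)^2 + \<beta> * (Y a b)^2 - \<alpha> - \<beta>
                 = 8 * int k + 8 * int m * a^2 + int n * ((2 * b + 1)^2 - 1)"
  shows "(theta_term \<alpha> \<beta> q has_sum q ^ k * (ram_phi (q ^ m) * (2 * ram_psi (q ^ n))))
           (range (\<lambda>(a, b). (X a b, Y a b)))"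
proof (rule has_sum_image_scaled)
  have "norm (q ^ m) < 1" "norm (q ^ n) < 1"
    using q mn by (simp_all add: norm_power power_less_one_iff)
  then show "((\<lambda>(a, b). (q ^ m) ^ nat (a^2) * (q ^ n) ^ nat (tri b))
               has_sum ram_phi (q ^ m) * (2 * ram_psi (q ^ n))) UNIV"
    by (intro has_sum_mult_product has_sum_ram_phi_int has_sum_ram_psi_int)
  show "inj_on (\<lambda>(a, b). (X a b, Y a b)) UNIV"
    by (auto simp: inj_on_def dest: inj)
  have "\<alpha> * (X a b)^2 + \<beta> * (Y a b)^2 - \<alpha> - \<beta>
          = 8 * (int k + int m * a^2 + int n * tri b)" for a b
    using form[of a b] unfolding eight_tri[symmetric] by (simp add: algebra_simps)
  then show "theta_term \<alpha> \<beta> q ((\<lambda>(a, b). (X a b, Y a b)) p)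
               = q ^ k * (case p of (a, b) \<Rightarrow> (q ^ m) ^ nat (a^2) * (q ^ n) ^ nat (tri b))" for p
    by (auto intro!: theta_term_eq simp: tri_nonneg split: prod.split)
qed

lemma has_sum_theta_term_psi_psi:
  fixes X Y :: "int \<Rightarrow> int \<Rightarrow> int" and q :: complex
  assumes q: "norm q < 1" and mn: "0 < m" "0 < n"
    and Q_split: "\<And>a b. Q a b \<longleftrightarrow> \<not> Q (- a - 1) b"
    and inj: "\<And>a b a' b'. X a b = X a' b' \<Longrightarrow> Y a b = Y a' b' \<Longrightarrow> a = a' \<and> b = b'"
    and form: "\<And>a b. \<alpha> * (X a b)^2 + \<beta> * (Y a b)^2 - \<alpha> - \<beta>
                 = 8 * int k + int m * ((2 * a + 1)^2 - 1) + int n * ((2 * b + 1)^2 - 1)"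
  shows "(theta_term \<alpha> \<beta> q has_sum 2 * q ^ k * ram_psi (q ^ m) * ram_psi (q ^ n))
           ((\<lambda>(a, b). (X a b, Y a b)) ` {(a, b). Q a b})"
proof -
  have "norm (q ^ m) < 1" "norm (q ^ n) < 1"
    using q mn by (simp_all add: norm_power power_less_one_iff)
  moreover have "(q ^ m) ^ nat (tri (- a - 1)) = (q ^ m) ^ nat (tri a)" for a
    by (simp only: tri_reflect)
  moreover have "(a, b) \<in> {(a, b). Q a b} \<longleftrightarrow> (- a - 1, b) \<notin> {(a, b). Q a b}" for a b
    using Q_split[of a b] by simp
  ultimately have "((\<lambda>(a, b). (q ^ m) ^ nat (tri a) * (q ^ n) ^ nat (tri b))
               has_sum (2 * ram_psi (q ^ m)) * (2 * ram_psi (q ^ n)) / 2) {(a, b). Q a b}"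
    by (intro has_sum_mult_half has_sum_ram_psi_int)
  then have "(theta_term \<alpha> \<beta> q has_sum q ^ k * ((2 * ram_psi (q ^ m)) * (2 * ram_psi (q ^ n)) / 2))
               ((\<lambda>(a, b). (X a b, Y a b)) ` {(a, b). Q a b})"
  proof (rule has_sum_image_scaled)
    show "inj_on (\<lambda>(a, b). (X a b, Y a b)) {(a, b). Q a b}"
      by (auto simp: inj_on_def dest: inj)
    have "\<alpha> * (X a b)^2 + \<beta> * (Y a b)^2 - \<alpha> - \<beta>
            = 8 * (int k + int m * tri a + int n * tri b)" for a b
      using form[of a b] unfolding eight_tri[symmetric] by (simp add: algebra_simps)
    then show "theta_term \<alpha> \<beta> q ((\<lambda>(a, b). (X a b, Y a b)) p)
                 = q ^ k * (case p of (a, b) \<Rightarrow> (q ^ m) ^ nat (tri a) * (q ^ n) ^ nat (tri b))" for p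
      by (auto intro!: theta_term_eq simp: tri_nonneg split: prod.split)
  qed
  then show ?thesis by (simp add: mult_ac)
qed

lemma int_cases_mod_4:
  fixes t :: int
  obtains k where "t = 4 * k" | k where "t = 4 * k + 2" | k where "t = 2 * k + 1"
proof (cases "even t")
  case True
  then obtain s where s: "t = 2 * s" ..
  show thesis
  proof (cases "even s")
    case True
    then obtain k where "s = 2 * k" ..
    with s that(1) show thesis by simp
  next
    case False
    then obtain k where "s = 2 * k + 1" by (rule oddE)
    with s that(2) show thesis by simp
  qed
next
  case False
  then obtain k where "t = 2 * k + 1" by (rule oddE)
  with that(3) show thesis by simp
qed

lemma odd_pairs_3_5_cases:
  fixes a b :: int
  assumes "even (a + b)"
  obtains (phi60_psi8) A B
      where "(2 * a + 1, 2 * b + 1) = (10 * A + 2 * B + 1, 2 * B + 1 - 6 * A)"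
    | (phi4_psi120) A B
      where "(2 * a + 1, 2 * b + 1) = (2 * A + 5 * (2 * B + 1), 2 * A - 3 * (2 * B + 1))"
    | (psi12_psi20) A B
      where "odd (A + B)" "(2 * a + 1, 2 * b + 1) = (5 * B - A + 2, 3 * A + B + 2)"
    | (phi40_psi48) A B
      where "(2 * a + 1, 2 * b + 1) = (10 * A - (2 * B + 1), 2 * A + 3 * (2 * B + 1))"
    | (phi24_psi80) A B
      where "(2 * a + 1, 2 * b + 1) = (5 * (2 * B + 1) - 2 * A, 6 * A + (2 * B + 1))"
proof -
  from assms have "even (a - b)"
    by simp
  then obtain u where a: "a = b + 2 * u"
    by (metis evenE add_diff_cancel_left' diff_add_cancel)
  show thesis
  proof (cases u rule: int_cases_mod_4)
    case (1 k)
    show thesis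
      by (rule phi60_psi8[where A = k and B = "b + 3 * k"]) (simp add: a 1 algebra_simps)
  next
    case (2 k)
    show thesis
      by (rule phi4_psi120[where A = "b + 3 * k + 2" and B = k]) (simp add: a 2 algebra_simps)
  next
    case (3 k)
    with a have a: "a = b + 4 * k + 2"
      by simp
    show thesis
    proof (cases "b + 3 * k + 2" rule: int_cases_mod_4)
      case (1 l)
      then have "b = 4 * l - 3 * k - 2"
        by simp
      then show thesis
        by (intro phi40_psi48[where A = l and B = "l - k - 1"]) (simp add: a algebra_simps)
    next
      case (2 l)
      then have "b = 4 * l - 3 * k"
        by simp
      then show thesis
        by (intro phi24_psi80[where A = "l - k" and B = l]) (simp add: a algebra_simps)
    next
      case (3 l)
      then have "b = 2 * l - 3 * k - 1"
        by simp
      then show thesis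
        by (intro psi12_psi20[where A = "l - 2 * k - 1" and B = l]) (simp_all add: a algebra_simps)
    qed
  qed
qed

lemma disjoint_if_images_disjoint: "f ` A \<inter> f ` B = {} \<Longrightarrow> A \<inter> B = {}"
  by blast

lemma has_sum_odd_pairs_3_5:
  fixes h :: "int \<times> int \<Rightarrow> 'a::{topological_comm_monoid_add, t2_space}"
  assumes "(h has_sum s1) (range (\<lambda>(a, b). (10 * a + 2 * b + 1, 2 * b + 1 - 6 * a)))"
      (is "(_ has_sum _) ?R1")
    and "(h has_sum s2) (range (\<lambda>(a, b). (2 * a + 5 * (2 * b + 1), 2 * a - 3 * (2 * b + 1))))"
      (is "(_ has_sum _) ?R2")
    and "(h has_sum s3) ((\<lambda>(a, b). (5 * b - a + 2, 3 * a + b + 2)) ` {(a, b). odd (a + b)})"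
      (is "(_ has_sum _) ?R3")
    and "(h has_sum s4) (range (\<lambda>(a, b). (10 * a - (2 * b + 1), 2 * a + 3 * (2 * b + 1))))"
      (is "(_ has_sum _) ?R4")
    and "(h has_sum s5) (range (\<lambda>(a, b). (5 * (2 * b + 1) - 2 * a, 6 * a + (2 * b + 1))))"
      (is "(_ has_sum _) ?R5")
  shows "(h has_sum s1 + s2 + s3 + s4 + s5)
           ((\<lambda>(a, b). (2 * a + 1, 2 * b + 1)) ` {(a, b). even (a + b)})"
    (is "(_ has_sum _) ?E")
proof -
  have "?R1 \<inter> ?R2 = {}"
    by (rule disjoint_if_images_disjoint[where f = "\<lambda>(x, y). x - y"]) (auto, presburger)
  moreover have "(?R1 \<union> ?R2) \<inter> ?R3 = {}"
    by (rule disjoint_if_images_disjoint[where f = "\<lambda>(x, y). 3 * x + y"]) (auto, presburger+)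
  moreover have "(?R1 \<union> ?R2 \<union> ?R3) \<inter> ?R4 = {}"
    by (rule disjoint_if_images_disjoint[where f = "\<lambda>(x, y). 3 * x + y"]) (auto, presburger+)
  moreover have "(?R1 \<union> ?R2 \<union> ?R3 \<union> ?R4) \<inter> ?R5 = {}"
    by (rule disjoint_if_images_disjoint[where f = "\<lambda>(x, y). 3 * x + y"]) (auto, presburger+)
  ultimately have "(h has_sum s1 + s2 + s3 + s4 + s5) (?R1 \<union> ?R2 \<union> ?R3 \<union> ?R4 \<union> ?R5)"
    by (intro has_sum_Un_disjoint assms)
  moreover have "?R1 \<union> ?R2 \<union> ?R3 \<union> ?R4 \<union> ?R5 = ?E"
  proof (intro equalityI subsetI)
    have "(x, y) \<in> ?E" if "odd x" "odd y" "4 dvd x - y" for x y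
    proof -
      from that obtain a b where "x = 2 * a + 1" "y = 2 * b + 1"
        by (meson oddE)
      moreover from that(3) calculation have "even (a + b)"
        by presburger
      ultimately show ?thesis
        by auto
    qed
    then show "p \<in> ?E" if "p \<in> ?R1 \<union> ?R2 \<union> ?R3 \<union> ?R4 \<union> ?R5" for p
      using that by auto
  next
    fix p assume "p \<in> ?E"
    then obtain a b where "even (a + b)" and p: "p = (2 * a + 1, 2 * b + 1)"
      by (auto simp del: even_add)
    then show "p \<in> ?R1 \<union> ?R2 \<union> ?R3 \<union> ?R4 \<union> ?R5"
      unfolding p by (cases rule: odd_pairs_3_5_cases) (auto simp: image_iff)
  qed
  ultimately show ?thesis
    by simp
qed

lemma ram_psi_3_5_identity:
  fixes q :: complex
  assumes q: "norm q < 1"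
  shows "ram_psi (q^3) * ram_psi (q^5) =
           ram_phi (q^60) * ram_psi (q^8) + q^14 * ram_phi (q^4) * ram_psi (q^120)
         + q^3 * ram_psi (q^12) * ram_psi (q^20) + q^5 * ram_phi (q^40) * ram_psi (q^48)
         + q^9 * ram_phi (q^24) * ram_psi (q^80)"
    (is "?l = ?r")
proof -
  let ?h = "theta_term 3 5 q" and ?E = "(\<lambda>(a, b). (2 * a + 1, 2 * b + 1)) ` {(a, b). even (a + b)}"
  have "(?h has_sum 2 * q^0 * ram_psi (q^3) * ram_psi (q^5)) ?E"
    by (rule has_sum_theta_term_psi_psi) (simp_all add: q power2_eq_square algebra_simps)
  moreover have "(?h has_sum q^0 * (ram_phi (q^60) * (2 * ram_psi (q^8)))
      + q^14 * (ram_phi (q^4) * (2 * ram_psi (q^120))) + 2 * q^3 * ram_psi (q^12) * ram_psi (q^20)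
      + q^5 * (ram_phi (q^40) * (2 * ram_psi (q^48))) + q^9 * (ram_phi (q^24) * (2 * ram_psi (q^80))))
      ?E" (is "(_ has_sum ?s) _")
    by (rule has_sum_odd_pairs_3_5[OF has_sum_theta_term_phi_psi has_sum_theta_term_phi_psi
          has_sum_theta_term_psi_psi has_sum_theta_term_phi_psi has_sum_theta_term_phi_psi])
       (simp_all add: q power2_eq_square algebra_simps)
  ultimately have "2 * q^0 * ram_psi (q^3) * ram_psi (q^5) = ?s"
    by (rule has_sum_unique)
  then have "2 * ?l = 2 * ?r"
    by (simp add: algebra_simps)
  then show ?thesis
    by (simp only: mult_cancel_left) simp
qed

lemma odd_pairs_1_15_cases:
  fixes a b :: int
  assumes "4 dvd a - b \<or> 4 dvd a + b - 1"
  obtains (phi120_psi16) A B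
      where "(2 * a + 1, 2 * b + 1) = (30 * A + 2 * B + 1, 2 * B + 1 - 2 * A)"
    | (phi8_psi240) A B
      where "(2 * a + 1, 2 * b + 1) = (2 * A + 15 * (2 * B + 1), 2 * A - (2 * B + 1))"
    | (psi4_psi60) A B
      where "even (A + B)" "(2 * a + 1, 2 * b + 1) = (A - 15 * B - 7, A + B + 1)"
    | (phi20_psi24) A B
      where "(2 * a + 1, 2 * b + 1) = (10 * A + 3 * (2 * B + 1), 2 * B + 1 - 2 * A)"
    | (phi12_psi40) A B
      where "(2 * a + 1, 2 * b + 1) = (6 * A + 5 * (2 * B + 1), 2 * A - (2 * B + 1))"
  using assms
proof
  assume "4 dvd a - b"
  then obtain t where a: "a = b + 4 * t"
    by (metis dvdE add_diff_cancel_left' diff_add_cancel)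
  show thesis
  proof (cases t rule: int_cases_mod_4)
    case (1 k)
    show thesis
      by (rule phi120_psi16[where A = k and B = "b + k"]) (simp add: a 1 algebra_simps)
  next
    case (2 k)
    show thesis
      by (rule phi8_psi240[where A = "b + k + 1" and B = k]) (simp add: a 2 algebra_simps)
  next
    case (3 k)
    show thesis
      by (rule psi4_psi60[where A = "2 * b + k + 1" and B = "- k - 1"]) (simp_all add: a 3 algebra_simps)
  qed
next
  assume "4 dvd a + b - 1"
  then obtain t where a: "a = 4 * t + 1 - b"
    by (metis dvdE diff_add_cancel eq_diff_eq)
  show thesis
  proof (cases "even (t - b)")
    case True
    then obtain k where "t - b = 2 * k" ..
    then show thesis
      by (intro phi20_psi24[where A = k and B = "b + k"]) (simp add: a algebra_simps)
  next
    case False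
    then obtain k where "t - b = 2 * k + 1" by (rule oddE)
    then show thesis
      by (intro phi12_psi40[where A = "b + k + 1" and B = k]) (simp add: a algebra_simps)
  qed
qed

lemma disjoint_if_separated:
  assumes "\<And>p. p \<in> A \<Longrightarrow> P p" and "\<And>p. p \<in> B \<Longrightarrow> \<not> P p"
  shows "A \<inter> B = {}"
  using assms by blast

lemma has_sum_odd_pairs_1_15:
  fixes h :: "int \<times> int \<Rightarrow> 'a::{topological_comm_monoid_add, t2_space}"
  assumes "(h has_sum s1) (range (\<lambda>(a, b). (30 * a + 2 * b + 1, 2 * b + 1 - 2 * a)))"
      (is "(_ has_sum _) ?R1")
    and "(h has_sum s2) (range (\<lambda>(a, b). (2 * a + 15 * (2 * b + 1), 2 * a - (2 * b + 1))))"
      (is "(_ has_sum _) ?R2")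
    and "(h has_sum s3) ((\<lambda>(a, b). (a - 15 * b - 7, a + b + 1)) ` {(a, b). even (a + b)})"
      (is "(_ has_sum _) ?R3")
    and "(h has_sum s4) (range (\<lambda>(a, b). (10 * a + 3 * (2 * b + 1), 2 * b + 1 - 2 * a)))"
      (is "(_ has_sum _) ?R4")
    and "(h has_sum s5) (range (\<lambda>(a, b). (6 * a + 5 * (2 * b + 1), 2 * a - (2 * b + 1))))"
      (is "(_ has_sum _) ?R5")
  shows "(h has_sum s1 + s2 + s3 + s4 + s5)
           ((\<lambda>(a, b). (2 * a + 1, 2 * b + 1)) ` {(a, b). 4 dvd a - b \<or> 4 dvd a + b - 1})"
    (is "(_ has_sum _) ?E")
proof -
  have "?R1 \<inter> ?R2 = {}"
    by (rule disjoint_if_images_disjoint[where f = "\<lambda>(x, y). x - y"]) (auto, presburger)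
  moreover have "(?R1 \<union> ?R2) \<inter> ?R3 = {}"
    by (rule disjoint_if_images_disjoint[where f = "\<lambda>(x, y). x - y"]) (auto, presburger+)
  moreover have R123_R45: "(?R1 \<union> ?R2 \<union> ?R3) \<inter> (?R4 \<union> ?R5) = {}"
    by (rule disjoint_if_separated[where P = "\<lambda>(x, y). 8 dvd x - y"]) (auto, presburger+)
  then have "(?R1 \<union> ?R2 \<union> ?R3) \<inter> ?R4 = {}"
    by blast
  moreover have "(?R1 \<union> ?R2 \<union> ?R3 \<union> ?R4) \<inter> ?R5 = {}"
  proof -
    have "?R4 \<inter> ?R5 = {}"
      by (rule disjoint_if_images_disjoint[where f = "\<lambda>(x, y). x - 3 * y"]) (auto, presburger)
    with R123_R45 show ?thesis
      by blast
  qed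
  ultimately have "(h has_sum s1 + s2 + s3 + s4 + s5) (?R1 \<union> ?R2 \<union> ?R3 \<union> ?R4 \<union> ?R5)"
    by (intro has_sum_Un_disjoint assms)
  moreover have "?R1 \<union> ?R2 \<union> ?R3 \<union> ?R4 \<union> ?R5 = ?E"
  proof (intro equalityI subsetI)
    have "(x, y) \<in> ?E" if "odd x" "odd y" "8 dvd x - y \<or> 8 dvd x - 3 * y" for x y
    proof -
      from that obtain a b where "x = 2 * a + 1" "y = 2 * b + 1"
        by (meson oddE)
      moreover from that(3) calculation have "4 dvd a - b \<or> 4 dvd a + b - 1"
        by presburger
      ultimately show ?thesis
        by auto
    qed
    then show "p \<in> ?E" if "p \<in> ?R1 \<union> ?R2 \<union> ?R3 \<union> ?R4 \<union> ?R5" for p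
      using that by auto
  next
    fix p assume "p \<in> ?E"
    then obtain a b where "4 dvd a - b \<or> 4 dvd a + b - 1" and p: "p = (2 * a + 1, 2 * b + 1)"
      by auto
    then show "p \<in> ?R1 \<union> ?R2 \<union> ?R3 \<union> ?R4 \<union> ?R5"
      unfolding p by (cases rule: odd_pairs_1_15_cases) (auto simp: image_iff)
  qed
  ultimately show ?thesis
    by simp
qed

lemma ram_psi_1_15_identity:
  fixes q :: complex
  assumes q: "norm q < 1"
  shows "ram_psi q * ram_psi (q^15) =
           ram_phi (q^120) * ram_psi (q^16) + q^28 * ram_phi (q^8) * ram_psi (q^240)
         + q^6 * ram_psi (q^4) * ram_psi (q^60) + q * ram_phi (q^20) * ram_psi (q^24)
         + q^3 * ram_phi (q^12) * ram_psi (q^40)"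
    (is "?l = ?r")
proof -
  let ?h = "theta_term 1 15 q"
    and ?E = "(\<lambda>(a, b). (2 * a + 1, 2 * b + 1)) ` {(a, b). 4 dvd a - b \<or> 4 dvd a + b - 1}"
  have "(?h has_sum 2 * q^0 * ram_psi (q^1) * ram_psi (q^15)) ?E"
    by (rule has_sum_theta_term_psi_psi) (simp_all add: q power2_eq_square algebra_simps, presburger)
  moreover have "(?h has_sum q^0 * (ram_phi (q^120) * (2 * ram_psi (q^16)))
      + q^28 * (ram_phi (q^8) * (2 * ram_psi (q^240))) + 2 * q^6 * ram_psi (q^4) * ram_psi (q^60)
      + q^1 * (ram_phi (q^20) * (2 * ram_psi (q^24))) + q^3 * (ram_phi (q^12) * (2 * ram_psi (q^40))))
      ?E" (is "(_ has_sum ?s) _")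
    by (rule has_sum_odd_pairs_1_15[OF has_sum_theta_term_phi_psi has_sum_theta_term_phi_psi
          has_sum_theta_term_psi_psi has_sum_theta_term_phi_psi has_sum_theta_term_phi_psi])
       (simp_all add: q power2_eq_square algebra_simps)
  ultimately have "2 * q^0 * ram_psi (q^1) * ram_psi (q^15) = ?s"
    by (rule has_sum_unique)
  then have "2 * ?l = 2 * ?r"
    by (simp add: algebra_simps)
  then show ?thesis
    by (simp only: mult_cancel_left) simp
qed

theorem lemma6p2:
  fixes q :: complex
  assumes "norm q < 1"
  shows "(ram_psi (q^3) * ram_psi (q^5) =
           ram_phi (q^60) * ram_psi (q^8) + q^14 * ram_phi (q^4) * ram_psi (q^120)
         + q^3 * ram_psi (q^12) * ram_psi (q^20) + q^5 * ram_phi (q^40) * ram_psi (q^48)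
         + q^9 * ram_phi (q^24) * ram_psi (q^80)) \<and>
         (ram_psi q * ram_psi (q^15) =
           ram_phi (q^120) * ram_psi (q^16) + q^28 * ram_phi (q^8) * ram_psi (q^240)
         + q^6 * ram_psi (q^4) * ram_psi (q^60) + q * ram_phi (q^20) * ram_psi (q^24)
         + q^3 * ram_phi (q^12) * ram_psi (q^40))"
  using ram_psi_3_5_identity[OF assms] ram_psi_1_15_identity[OF assms] by (rule conjI)

end
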